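(* Let $f:[1/\sqrt2,1)\to\mathbb{R}$, $f(q)=(4q^4-5q^2+1)\mathrm{K}(q)+(-8q^4+8q^2-1)\mathrm{E}(q)$. Then there exists a unique $\hat q\in(1/\sqrt2,q_* )$ such that $f(\hat q)=0$. In addition, $f>0$ on $[1/\sqrt2,\hat q)$ and $f<0$ on $(\hat q,1)$.
   Context: For $q\in[0,1)$, $\mathrm{K}(q)=\int_0^{\pi/2}(1-q^2\sin^2\theta)^{-1/2}\,d\theta$ and $\mathrm{E}(q)=\int_0^{\pi/2}(1-q^2\sin^2\theta)^{1/2}\,d\theta$ are the complete elliptic integrals of the first and second kind. The function $q\mapsto2\mathrm{E}(q)-\mathrm{K}(q)$ is strictly decreasing on $[0,1)$ and $q_*\in(0,1)$ denotes its unique zero. *)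

theory Defs
  imports "HOL-Analysis.Analysis"
begin

definition ellK :: "real \<Rightarrow> real" where
  "ellK q = integral {0..pi/2} (\<lambda>\<theta>. 1 / sqrt (1 - q^2 * (sin \<theta>)^2))"

definition ellE :: "real \<Rightarrow> real" where
  "ellE q = integral {0..pi/2} (\<lambda>\<theta>. sqrt (1 - q^2 * (sin \<theta>)^2))"

definition qstar :: real where
  "qstar = (THE q. 0 < q \<and> q < 1 \<and> 2 * ellE q - ellK q = 0)"

definition fhat :: "real \<Rightarrow> real" where
  "fhat q = (4*q^4 - 5*q^2 + 1) * ellK q + (-8*q^4 + 8*q^2 - 1) * ellE q"

end

theory Submission
  imports Defs
begin

text \<open>
  Write \<open>m = q\<^sup>2\<close>, so that \<open>fhat q = A m * K q + B m * E q\<close> with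
  \<open>A m = fhat_coeffK m = (4m - 1)(m - 1)\<close>, which is negative for \<open>1/2 \<le> m < 1\<close>, and
  \<open>B m = fhat_coeffE m = -8m\<^sup>2 + 8m - 1\<close>.
  At \<open>q = 1/\<surd>2\<close> one gets \<open>fhat = (2E - K)/2 > 0\<close>, and at \<open>q\<^sub>*\<close>, where \<open>K = 2E\<close>, one gets
  \<open>fhat = (1 - 2q\<^sub>*\<^sup>2) E < 0\<close>; so \<open>fhat\<close> has a zero in between.
  Uniqueness and the sign pattern follow from a one-sided crossing property: once \<open>fhat\<close> is
  \<open>\<le> 0\<close> at some \<open>q \<ge> 1/\<surd>2\<close>, it stays negative to the right. Where \<open>B \<le> 0\<close> both terms are
  negative; where \<open>B > 0\<close> the sign of \<open>fhat\<close> is that of \<open>E/K + A/B\<close>, and \<open>E/K\<close> is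
  decreasing while \<open>A/B\<close> is strictly decreasing in \<open>m\<close>.

  That \<open>q\<^sub>*\<close> lies in \<open>(1/\<surd>2, 1)\<close> follows since \<open>2E - K\<close> is strictly decreasing, positive at
  \<open>1/\<surd>2\<close>, and negative at \<open>q = \<surd>0.9999\<close>, where comparing the integrand of \<open>K\<close> with
  \<open>1/(\<pi>/2 - t + 1/100)\<close> gives \<open>K > \<pi> \<ge> 2E\<close>.
\<close>

lemma elliptic_radicand_pos:
  fixes q t :: real
  assumes "q^2 < 1"
  shows "0 < 1 - q^2 * (sin t)^2"
proof -
  have "q^2 * (sin t)^2 \<le> q^2" by (simp add: mult_left_le abs_square_le_1)
  then show ?thesis using assms by linarith
qed

lemma has_integral_ellK:
  fixes q :: real
  assumes "q^2 < 1"
  shows "((\<lambda>t. 1 / sqrt (1 - q^2 * (sin t)^2)) has_integral ellK q) {0..pi/2}"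
proof -
  have "(\<lambda>t. 1 / sqrt (1 - q^2 * (sin t)^2)) integrable_on {0..pi/2}"
    using elliptic_radicand_pos[OF assms]
    by (intro integrable_continuous_interval continuous_intros) (auto simp: less_le)
  then show ?thesis unfolding ellK_def by (rule integrable_integral)
qed

lemma has_integral_ellE:
  "((\<lambda>t. sqrt (1 - q^2 * (sin t)^2)) has_integral ellE q) {0..pi/2}"
proof -
  have "(\<lambda>t. sqrt (1 - q^2 * (sin t)^2)) integrable_on {0..pi/2}"
    by (intro integrable_continuous_interval continuous_intros)
  then show ?thesis unfolding ellE_def by (rule integrable_integral)
qed

lemma continuous_on_ellK: "continuous_on {-1<..<1} ellK"
proof -
  have "continuous_on ({-1<..<1} \<times> cbox 0 (pi/2))
      (\<lambda>z. 1 / sqrt (1 - (fst z)^2 * (sin (snd z))^2))"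
  proof (intro continuous_intros ballI)
    fix z :: "real \<times> real"
    assume "z \<in> {-1<..<1} \<times> cbox 0 (pi/2)"
    then have "(fst z)^2 < 1" by (auto simp: abs_square_less_1)
    then show "sqrt (1 - (fst z)^2 * (sin (snd z))^2) \<noteq> 0"
      using elliptic_radicand_pos by (simp add: less_le)
  qed
  from integral_continuous_on_param[of _ _ _ "\<lambda>q t. 1 / sqrt (1 - q^2 * (sin t)^2)"] this
  show ?thesis unfolding ellK_def by (simp add: case_prod_unfold cbox_interval)
qed

lemma continuous_on_ellE: "continuous_on UNIV ellE"
proof -
  have "continuous_on (UNIV \<times> cbox 0 (pi/2)) (\<lambda>z. sqrt (1 - (fst z)^2 * (sin (snd z))^2))"
    by (intro continuous_intros)
  from integral_continuous_on_param[of _ _ _ "\<lambda>q t. sqrt (1 - q^2 * (sin t)^2)"] this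
  show ?thesis unfolding ellE_def by (simp add: case_prod_unfold cbox_interval)
qed

lemma ellK_mono:
  fixes a b :: real
  assumes "a^2 \<le> b^2" "b^2 < 1"
  shows "ellK a \<le> ellK b"
proof -
  have "1 / sqrt (1 - a^2 * (sin t)^2) \<le> 1 / sqrt (1 - b^2 * (sin t)^2)" for t
    using elliptic_radicand_pos[of a t] elliptic_radicand_pos[of b t] assms
    by (intro divide_left_mono real_sqrt_le_mono mult_pos_pos) (auto intro: mult_right_mono)
  then show ?thesis
    using has_integral_le[OF has_integral_ellK has_integral_ellK] assms by force
qed

lemma ellE_antimono:
  fixes a b :: real
  assumes "a^2 \<le> b^2"
  shows "ellE b \<le> ellE a"
proof -
  have "sqrt (1 - b^2 * (sin t)^2) \<le> sqrt (1 - a^2 * (sin t)^2)" for t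
    using assms by (simp add: mult_right_mono)
  then show ?thesis using has_integral_le[OF has_integral_ellE has_integral_ellE] by blast
qed

lemma ellK_ge_pi_half:
  fixes q :: real
  assumes "q^2 < 1"
  shows "pi/2 \<le> ellK q"
proof -
  have "1 \<le> 1 / sqrt (1 - q^2 * (sin t)^2)" for t
    using elliptic_radicand_pos[OF assms, of t] by simp
  moreover have "((\<lambda>t. 1) has_integral pi/2) {0..pi/2}"
    using has_integral_const_real[of "1::real" 0 "pi/2"] by simp
  ultimately show ?thesis using has_integral_le[OF _ has_integral_ellK[OF assms]] by blast
qed

lemma ellE_le_pi_half: "ellE q \<le> pi/2"
proof -
  have "sqrt (1 - q^2 * (sin t)^2) \<le> 1" for t by simp
  moreover have "((\<lambda>t. 1) has_integral pi/2) {0..pi/2}"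
    using has_integral_const_real[of "1::real" 0 "pi/2"] by simp
  ultimately show ?thesis using has_integral_le[OF has_integral_ellE] by blast
qed

lemma ellE_pos:
  fixes q :: real
  assumes "q^2 < 1"
  shows "0 < ellE q"
proof -
  have "sqrt (1 - q^2) \<le> sqrt (1 - q^2 * (sin t)^2)" for t
    by (simp add: abs_square_le_1 mult_left_le)
  moreover have "((\<lambda>t. sqrt (1 - q^2)) has_integral sqrt (1 - q^2) * (pi/2)) {0..pi/2}"
    using has_integral_const_real[of "sqrt (1 - q^2)" 0 "pi/2"] by (simp add: algebra_simps)
  ultimately have "sqrt (1 - q^2) * (pi/2) \<le> ellE q"
    using has_integral_le[OF _ has_integral_ellE] by blast
  moreover have "0 < sqrt (1 - q^2) * (pi/2)" using assms by simp
  ultimately show ?thesis by linarith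
qed

lemma has_integral_sin_squared: "((\<lambda>t. (sin t)^2) has_integral pi/4) {0..pi/2}"
proof -
  have "((\<lambda>t. (sin t)^2) has_integral
      ((\<lambda>t. t/2 - sin t * cos t / 2) (pi/2) - (\<lambda>t. t/2 - sin t * cos t / 2) 0)) {0..pi/2}"
  proof (rule fundamental_theorem_of_calculus)
    fix x :: real
    have "((\<lambda>t. t/2 - sin t * cos t / 2) has_real_derivative
        (1/2 - (cos x * cos x + sin x * (- sin x))/2)) (at x within {0..pi/2})"
      by (auto intro!: derivative_eq_intros)
    moreover have "1/2 - (cos x * cos x + sin x * (- sin x))/2 = (sin x)^2"
      using sin_cos_squared_add[of x] by (simp add: power2_eq_square field_simps)
    ultimately show "((\<lambda>t. t/2 - sin t * cos t / 2) has_vector_derivative (sin x)^2)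
        (at x within {0..pi/2})"
      by (simp add: has_real_derivative_iff_has_vector_derivative)
  qed simp
  then show ?thesis by simp
qed

lemma sqrt_diff_ge_half_diff:
  fixes u v :: real
  assumes "0 \<le> v" "v \<le> u" "u \<le> 1"
  shows "(u - v) / 2 \<le> sqrt u - sqrt v"
proof -
  have "sqrt u \<le> 1" "sqrt v \<le> 1" using assms by auto
  then have sum_le: "sqrt u + sqrt v \<le> 2" by linarith
  have "u - v = (sqrt u - sqrt v) * (sqrt u + sqrt v)"
    using assms by (simp add: algebra_simps)
  also have "\<dots> \<le> (sqrt u - sqrt v) * 2"
    using assms sum_le by (intro mult_left_mono) auto
  finally show ?thesis by simp
qed

lemma ellE_diff_ge:
  fixes a b :: real
  assumes "a^2 \<le> b^2" "b^2 \<le> 1"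
  shows "(b^2 - a^2) * pi / 8 \<le> ellE a - ellE b"
proof -
  have pointwise:
    "sqrt (1 - b^2 * (sin t)^2) + (b^2 - a^2)/2 * (sin t)^2 \<le> sqrt (1 - a^2 * (sin t)^2)" for t
  proof -
    have "((1 - a^2 * (sin t)^2) - (1 - b^2 * (sin t)^2)) / 2
        \<le> sqrt (1 - a^2 * (sin t)^2) - sqrt (1 - b^2 * (sin t)^2)"
      using assms
      by (intro sqrt_diff_ge_half_diff) (auto simp: mult_right_mono mult_le_one abs_square_le_1)
    then show ?thesis by (simp add: algebra_simps)
  qed
  have "((\<lambda>t. sqrt (1 - b^2 * (sin t)^2) + (b^2 - a^2)/2 * (sin t)^2)
      has_integral (ellE b + (b^2 - a^2)/2 * (pi/4))) {0..pi/2}"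
    by (intro has_integral_add has_integral_ellE has_integral_mult_right has_integral_sin_squared)
  from has_integral_le[OF this has_integral_ellE pointwise] show ?thesis by simp
qed

lemma two_ellE_minus_ellK_strict_antimono:
  fixes a b :: real
  assumes "a^2 < b^2" "b^2 < 1"
  shows "2 * ellE b - ellK b < 2 * ellE a - ellK a"
proof -
  have "0 < (b^2 - a^2) * pi / 8" using assms by simp
  then show ?thesis using ellE_diff_ge[of a b] ellK_mono[of a b] assms by linarith
qed

lemma two_ellE_minus_ellK_pos_at_half:
  fixes q :: real
  assumes q: "q^2 = 1/2"
  shows "0 < 2 * ellE q - ellK q"
proof -
  have pointwise:
    "1 - (sin t)^2 \<le> 2 * sqrt (1 - q^2 * (sin t)^2) - 1 / sqrt (1 - q^2 * (sin t)^2)" for t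
  proof -
    define w where "w = sqrt (1 - q^2 * (sin t)^2)"
    have s1: "(sin t)^2 \<le> 1" by (simp add: abs_square_le_1)
    have w: "0 < w" "w \<le> 1" "w * w = 1 - (sin t)^2 / 2"
      unfolding w_def q using s1 by auto
    then have "2 * w - 1 / w = (1 - (sin t)^2) / w" by (simp add: field_simps)
    moreover have "1 - (sin t)^2 \<le> (1 - (sin t)^2) / w"
      using w s1 by (simp add: le_divide_eq mult_left_le)
    ultimately show ?thesis unfolding w_def by simp
  qed
  have cos_squared: "((\<lambda>t. 1 - (sin t)^2) has_integral pi/2 - pi/4) {0..pi/2}"
    using has_integral_diff[OF has_integral_const_real[of 1 0 "pi/2"] has_integral_sin_squared]
    by simp
  have "((\<lambda>t. 2 * sqrt (1 - q^2 * (sin t)^2) - 1 / sqrt (1 - q^2 * (sin t)^2))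
      has_integral (2 * ellE q - ellK q)) {0..pi/2}"
    using q by (intro has_integral_diff has_integral_mult_right has_integral_ellE has_integral_ellK) simp
  from has_integral_le[OF cos_squared this pointwise] have "pi/4 \<le> 2 * ellE q - ellK q"
    by simp
  then show ?thesis using pi_gt_zero by linarith
qed

lemma exp_pi_less: "exp pi < 1 + 50 * pi"
proof -
  have "exp pi < exp 4" using pi_less_4 by simp
  also have "exp (4::real) = (exp 1)^4" by (simp add: exp_of_nat_mult[symmetric])
  also have "\<dots> \<le> 3^4" using exp_le by (intro power_mono) auto
  also have "(3::real)^4 < 1 + 50 * pi" using pi_gt3 by simp
  finally show ?thesis .
qed

lemma ellK_gt_pi:
  fixes q :: real
  assumes q: "q^2 = 9999/10000"
  shows "pi < ellK q"
proof -
  have q_less_1: "q^2 < 1" using q by simp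
  have pointwise: "1 / (pi/2 - t + 1/100) \<le> 1 / sqrt (1 - q^2 * (sin t)^2)"
    if t: "t \<in> {0..pi/2}" for t
  proof -
    have "cos t = sin (pi/2 - t)" by (simp add: sin_cos_eq)
    also have "\<dots> \<le> pi/2 - t" using t by (intro sin_x_le_x) auto
    finally have cos_le: "cos t \<le> pi/2 - t" .
    have "1 - q^2 * (sin t)^2 = (cos t)^2 + (sin t)^2 / 10000"
      using sin_cos_squared_add[of t] unfolding q by (simp add: algebra_simps)
    also have "\<dots> \<le> (pi/2 - t)^2 + 1/10000"
      using t cos_le cos_ge_zero[of t]
      by (intro add_mono power_mono) (auto simp: abs_square_le_1)
    also have "\<dots> \<le> (pi/2 - t + 1/100)^2" using t by (simp add: power2_eq_square algebra_simps)
    finally have "sqrt (1 - q^2 * (sin t)^2) \<le> sqrt ((pi/2 - t + 1/100)^2)"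
      by (rule real_sqrt_le_mono)
    also have "\<dots> = pi/2 - t + 1/100" using t by simp
    finally show ?thesis
      using elliptic_radicand_pos[OF q_less_1, of t] t by (intro divide_left_mono) auto
  qed
  have "((\<lambda>t. 1 / (pi/2 - t + 1/100)) has_integral
      ((\<lambda>t. - ln (pi/2 - t + 1/100)) (pi/2) - (\<lambda>t. - ln (pi/2 - t + 1/100)) 0)) {0..pi/2}"
  proof (rule fundamental_theorem_of_calculus)
    fix x :: real
    assume "x \<in> {0..pi/2}"
    then have "((\<lambda>t. - ln (pi/2 - t + 1/100)) has_real_derivative
        (- ((0 - 1 + 0) / (pi/2 - x + 1/100)))) (at x within {0..pi/2})"
      by (auto intro!: derivative_eq_intros)
    then show "((\<lambda>t. - ln (pi/2 - t + 1/100)) has_vector_derivative 1 / (pi/2 - x + 1/100))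
        (at x within {0..pi/2})"
      by (simp add: has_real_derivative_iff_has_vector_derivative)
  qed simp
  from has_integral_le[OF this has_integral_ellK[OF q_less_1] pointwise]
  have "ln (pi/2 + 1/100) - ln (1/100) \<le> ellK q" using q by simp
  moreover have "ln (1 + 50 * pi) = ln (pi/2 + 1/100) - ln (1/100)"
  proof -
    have "1 + 50 * pi = (pi/2 + 1/100) * 100" by simp
    also have "ln \<dots> = ln (pi/2 + 1/100) + ln 100" using pi_gt_zero by (intro ln_mult_pos) linarith+
    finally show ?thesis by (simp add: ln_div)
  qed
  moreover have "pi < ln (1 + 50 * pi)"
    using exp_pi_less pi_gt_zero by (metis ln_exp ln_less_cancel_iff exp_gt_zero less_trans)
  ultimately show ?thesis by linarith
qed

lemma continuous_on_two_ellE_minus_ellK: "continuous_on {-1<..<1} (\<lambda>q. 2 * ellE q - ellK q)"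
  by (intro continuous_intros continuous_on_ellK continuous_on_subset[OF continuous_on_ellE]) simp

lemma inv_sqrt2_interval_subset:
  fixes b :: real
  assumes "b < 1"
  shows "{1 / sqrt 2 .. b} \<subseteq> {-1<..<1}"
proof
  fix x
  assume "x \<in> {1 / sqrt 2 .. b}"
  moreover have "0 < 1 / sqrt (2::real)" by simp
  ultimately show "x \<in> {-1<..<1}"
    using assms unfolding atLeastAtMost_iff greaterThanLessThan_iff by linarith
qed

lemma qstar_eqI:
  fixes z :: real
  assumes "0 < z" "z < 1" "2 * ellE z - ellK z = 0"
  shows "qstar = z"
  unfolding qstar_def
proof (rule the_equality)
  show "0 < z \<and> z < 1 \<and> 2 * ellE z - ellK z = 0" using assms by blast
next
  fix q :: real
  assume q: "0 < q \<and> q < 1 \<and> 2 * ellE q - ellK q = 0"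
  have "q^2 < 1" "z^2 < 1" using q assms by (simp_all add: abs_square_less_1)
  have "q^2 = z^2"
  proof (rule ccontr)
    assume "q^2 \<noteq> z^2"
    then consider "q^2 < z^2" | "z^2 < q^2" by linarith
    then show False
      using two_ellE_minus_ellK_strict_antimono \<open>q^2 < 1\<close> \<open>z^2 < 1\<close> q assms by cases force+
  qed
  then show "q = z" using q assms by simp
qed

lemma
  shows inv_sqrt2_less_qstar: "1 / sqrt 2 < qstar"
    and qstar_less_1: "qstar < 1"
    and ellK_qstar: "ellK qstar = 2 * ellE qstar"
proof -
  define q1 :: real where "q1 = sqrt (9999/10000)"
  have "1 / sqrt 2 = sqrt (1/2::real)" by (simp add: real_sqrt_divide)
  then have q1: "1 / sqrt 2 < q1" "q1 < 1" "q1^2 = 9999/10000"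
    unfolding q1_def by (simp_all add: real_sqrt_less_mono)
  have inv_sqrt2: "0 < 1 / sqrt (2::real)" "(1 / sqrt 2)^2 = (1/2::real)"
    by (simp_all add: power_divide)
  have neg: "2 * ellE q1 - ellK q1 < 0" using ellK_gt_pi[OF q1(3)] ellE_le_pi_half[of q1] by linarith
  have pos: "0 < 2 * ellE (1 / sqrt 2) - ellK (1 / sqrt 2)"
    using two_ellE_minus_ellK_pos_at_half[OF inv_sqrt2(2)] .
  have "continuous_on {1 / sqrt 2 .. q1} (\<lambda>q. 2 * ellE q - ellK q)"
    using continuous_on_two_ellE_minus_ellK inv_sqrt2_interval_subset[OF q1(2)]
    by (rule continuous_on_subset)
  then obtain z where z: "1 / sqrt 2 \<le> z" "z \<le> q1" "2 * ellE z - ellK z = 0"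
    using IVT2'[of "\<lambda>q. 2 * ellE q - ellK q" q1 0 "1 / sqrt 2"] neg pos q1 by force
  have "z \<noteq> 1 / sqrt 2" "z \<noteq> q1" using z pos neg by auto
  then have "1 / sqrt 2 < z" "z < 1" using z q1 by linarith+
  moreover have "qstar = z" by (intro qstar_eqI) (use z inv_sqrt2 calculation in linarith)+
  ultimately show "1 / sqrt 2 < qstar" "qstar < 1" "ellK qstar = 2 * ellE qstar"
    using z by auto
qed

definition fhat_coeffK :: "real \<Rightarrow> real" where
  "fhat_coeffK m = 4*m^2 - 5*m + 1"

definition fhat_coeffE :: "real \<Rightarrow> real" where
  "fhat_coeffE m = -8*m^2 + 8*m - 1"

lemma fhat_eq_coeffs: "fhat q = fhat_coeffK (q^2) * ellK q + fhat_coeffE (q^2) * ellE q"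
  unfolding fhat_def fhat_coeffK_def fhat_coeffE_def by (simp add: power_mult[symmetric])

lemma fhat_coeffK_neg:
  fixes m :: real
  assumes "1/4 < m" "m < 1"
  shows "fhat_coeffK m < 0"
proof -
  have "fhat_coeffK m = (4*m - 1) * (m - 1)"
    unfolding fhat_coeffK_def by (simp add: algebra_simps power2_eq_square)
  then show ?thesis using assms by (simp add: mult_pos_neg)
qed

lemma fhat_coeffE_antimono:
  fixes m n :: real
  assumes "1 \<le> m + n" "m \<le> n"
  shows "fhat_coeffE n \<le> fhat_coeffE m"
proof -
  have "fhat_coeffE m - fhat_coeffE n = 8 * (n - m) * (m + n - 1)"
    unfolding fhat_coeffE_def by (simp add: algebra_simps power2_eq_square)
  moreover have "0 \<le> 8 * (n - m) * (m + n - 1)" using assms by simp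
  ultimately show ?thesis by linarith
qed

text \<open>Where \<open>fhat_coeffE\<close> is positive, this says that \<open>fhat_coeffK / fhat_coeffE\<close> is strictly
  decreasing on \<open>[1/2, \<infinity>)\<close>.\<close>
lemma fhat_coeffs_cross_less:
  fixes m n :: real
  assumes "1/2 \<le> m" "m < n"
  shows "fhat_coeffK n * fhat_coeffE m < fhat_coeffK m * fhat_coeffE n"
proof -
  have "fhat_coeffK m * fhat_coeffE n - fhat_coeffK n * fhat_coeffE m
      = (n - m) * (8 * (m - 1/2) * (n - 1/2) + 1)"
    unfolding fhat_coeffK_def fhat_coeffE_def by (simp add: algebra_simps power2_eq_square)
  moreover have "0 < (n - m) * (8 * (m - 1/2) * (n - 1/2) + 1)"
    using assms by (intro mult_pos_pos) (simp_all add: add_nonneg_pos)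
  ultimately show ?thesis by linarith
qed

lemma linear_combination_neg_transfer:
  fixes A A' B B' E E' K K' :: real
  assumes "0 < B" "0 < B'" "A < 0" "0 < K" "K \<le> K'" "E' \<le> E"
    and "A * K + B * E \<le> 0" and "A' * B < A * B'"
  shows "A' * K' + B' * E' < 0"
proof -
  have "B * (A' * K' + B' * E') \<le> B * A' * K' + B' * (B * E)"
    using assms by (simp add: algebra_simps)
  also have "\<dots> \<le> B * A' * K' + B' * (- A * K)"
    using assms by (intro add_left_mono mult_left_mono) auto
  also have "\<dots> \<le> B * A' * K' + (- A * B') * K'"
    using assms by (simp add: mult_left_mono mult_neg_pos less_imp_le)
  also have "\<dots> = K' * (A' * B - A * B')" by (simp add: algebra_simps)
  also have "\<dots> < 0" using assms by (simp add: mult_pos_neg)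
  finally show ?thesis using assms(1) by (simp add: mult_less_0_iff)
qed

lemma fhat_neg_propagates:
  fixes a b :: real
  assumes "1 / sqrt 2 \<le> a" "a < b" "b < 1" "fhat a \<le> 0"
  shows "fhat b < 0"
proof -
  define m n where "m = a^2" and "n = b^2"
  have "0 < a" by (rule less_le_trans[OF _ assms(1)]) simp
  have m: "1/2 \<le> m" unfolding m_def using power_mono[OF assms(1), of 2] by (simp add: power_divide)
  have mn: "m < n" "n < 1" unfolding m_def n_def using \<open>0 < a\<close> assms
    by (simp_all add: power_strict_mono abs_square_less_1)
  have K: "0 < ellK a" "ellK a \<le> ellK b"
    using ellK_ge_pi_half[of a] ellK_mono[of a b] pi_gt3 mn unfolding m_def n_def by simp_all
  have E: "0 < ellE b" "ellE b \<le> ellE a"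
    using ellE_pos[of b] ellE_antimono[of a b] mn unfolding m_def n_def by simp_all
  have An: "fhat_coeffK n < 0" using m mn by (intro fhat_coeffK_neg) auto
  show ?thesis
  proof (cases "fhat_coeffE n \<le> 0")
    case True
    have "fhat_coeffK n * ellK b < 0" using An K by (simp add: mult_neg_pos)
    moreover have "fhat_coeffE n * ellE b \<le> 0" using True E by (simp add: mult_nonpos_nonneg)
    ultimately show ?thesis unfolding fhat_eq_coeffs n_def by linarith
  next
    case False
    show ?thesis unfolding fhat_eq_coeffs n_def[symmetric]
    proof (rule linear_combination_neg_transfer[where A = "fhat_coeffK m" and B = "fhat_coeffE m",
          OF _ _ _ K E(2)])
      show "0 < fhat_coeffE n" using False by simp
      then show "0 < fhat_coeffE m" using fhat_coeffE_antimono[of m n] m mn by linarith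
      show "fhat_coeffK m < 0" using m mn by (intro fhat_coeffK_neg) auto
      show "fhat_coeffK m * ellK a + fhat_coeffE m * ellE a \<le> 0"
        using assms(4) unfolding fhat_eq_coeffs m_def .
      show "fhat_coeffK n * fhat_coeffE m < fhat_coeffK m * fhat_coeffE n"
        using m mn(1) by (rule fhat_coeffs_cross_less)
    qed
  qed
qed

lemma continuous_on_fhat: "continuous_on {-1<..<1} fhat"
  unfolding fhat_def
  by (intro continuous_intros continuous_on_ellK continuous_on_subset[OF continuous_on_ellE]) simp

lemma fhat_pos_at_half:
  fixes q :: real
  assumes "q^2 = 1/2"
  shows "0 < fhat q"
proof -
  have "fhat q = (2 * ellE q - ellK q) / 2"
    unfolding fhat_eq_coeffs assms fhat_coeffK_def fhat_coeffE_def by (simp add: power2_eq_square)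
  then show ?thesis using two_ellE_minus_ellK_pos_at_half[OF assms] by simp
qed

lemma fhat_qstar_neg: "fhat qstar < 0"
proof -
  have "fhat qstar = ellE qstar * (1 - 2 * qstar^2)"
    unfolding fhat_eq_coeffs fhat_coeffK_def fhat_coeffE_def ellK_qstar
    by (simp add: algebra_simps power2_eq_square)
  moreover have "0 < qstar" by (rule less_trans[OF _ inv_sqrt2_less_qstar]) simp
  then have "0 < ellE qstar" using qstar_less_1 by (intro ellE_pos) (simp add: abs_square_less_1)
  moreover have "1/2 < qstar^2"
    using power_strict_mono[OF inv_sqrt2_less_qstar, of 2] by (simp add: power_divide)
  ultimately show ?thesis by (simp add: mult_pos_neg)
qed

lemma unique_zero_if_negativity_propagates:
  fixes f :: "real \<Rightarrow> real"
  assumes "continuous_on {a..c} f" "0 < f a" "f c < 0" "a \<le> c" "c \<le> d"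
    and propagate: "\<And>x y. a \<le> x \<Longrightarrow> x < y \<Longrightarrow> y < d \<Longrightarrow> f x \<le> 0 \<Longrightarrow> f y < 0"
  shows "\<exists>z. a < z \<and> z < c \<and> f z = 0 \<and>
     (\<forall>x. a < x \<and> x < c \<and> f x = 0 \<longrightarrow> x = z) \<and>
     (\<forall>x. a \<le> x \<and> x < z \<longrightarrow> f x > 0) \<and>
     (\<forall>x. z < x \<and> x < d \<longrightarrow> f x < 0)"
proof -
  obtain z where z: "a \<le> z" "z \<le> c" "f z = 0"
    using IVT2'[of f c 0 a] assms by force
  then have "a < z" "z < c" using assms(2,3) by (auto simp: order.order_iff_strict)
  have pos: "f x > 0" if "a \<le> x" "x < z" for x
    using propagate[of x z] that z \<open>z < c\<close> assms(5) by force
  have neg: "f x < 0" if "z < x" "x < d" for x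
    using propagate[of z x] that z by force
  have "x = z" if "a < x" "x < c" "f x = 0" for x
    using pos[of x] neg[of x] that assms(5) by (cases x z rule: linorder_cases) auto
  then show ?thesis using \<open>a < z\<close> \<open>z < c\<close> z pos neg by blast
qed

theorem lemma2p3:
  shows "\<exists>qh. 1 / sqrt 2 < qh \<and> qh < qstar \<and> fhat qh = 0 \<and>
     (\<forall>q. 1 / sqrt 2 < q \<and> q < qstar \<and> fhat q = 0 \<longrightarrow> q = qh) \<and>
     (\<forall>q. 1 / sqrt 2 \<le> q \<and> q < qh \<longrightarrow> fhat q > 0) \<and>
     (\<forall>q. qh < q \<and> q < 1 \<longrightarrow> fhat q < 0)"
proof (rule unique_zero_if_negativity_propagates)
  show "continuous_on {1 / sqrt 2 .. qstar} fhat"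
    using continuous_on_fhat inv_sqrt2_interval_subset[OF qstar_less_1] by (rule continuous_on_subset)
  show "0 < fhat (1 / sqrt 2)" by (rule fhat_pos_at_half) (simp add: power_divide)
  show "fhat qstar < 0" by (rule fhat_qstar_neg)
  show "1 / sqrt 2 \<le> qstar" "qstar \<le> 1" using inv_sqrt2_less_qstar qstar_less_1 by simp_all
  show "fhat y < 0" if "1 / sqrt 2 \<le> x" "x < y" "y < 1" "fhat x \<le> 0" for x y
    using that by (rule fhat_neg_propagates)
qed

end
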